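(* Let $\mathfrak{N}$ be a pseudo-Euclidean 2-step nilpotent Lie algebra with center $\mathfrak{Z}$, let $(e_1,\ldots,e_p)$ be a basis of $\mathfrak{Z}$ and let $(J_1,\ldots,J_p)$ be the associated structure endomorphisms. Define endomorphisms $F,G:\mathfrak{N}\to\mathfrak{N}$ by $$F=\frac12\sum_{i,j=1}^p\langle e_i,e_j\rangle\, J_i\circ J_j,\qquad G(u)=-\frac14\sum_{i,j=1}^p\langle e_i,u\rangle\,\mathrm{tr}(J_i\circ J_j)\,e_j .$$ Then $F$ and $G$ are symmetric with respect to $\langle\cdot,\cdot\rangle$, they do not depend on the choice of the basis $(e_1,\ldots,e_p)$ of $\mathfrak{Z}$, and $F\circ G=G\circ F=0$.
   Context: A pseudo-Euclidean Lie algebra is a finite-dimensional real Lie algebra endowed with a nondegenerate symmetric bilinear form $\langle\cdot,\cdot\rangle$ (no invariance assumed). A Lie algebra $\mathfrak{N}$ is 2-step nilpotent if $[\mathfrak{N},\mathfrak{N}]\neq 0$ and $[\mathfrak{N},\mathfrak{N}]\subset\mathfrak{Z}$, the center. Given a basis $(e_1,\ldots,e_p)$ of $\mathfrak{Z}$, the structure endomorphisms $J_1,\ldots,J_p$ are the unique endomorphisms of $\mathfrak{N}$, skew-symmetric with respect to $\langle\cdot,\cdot\rangle$, such that $[u,v]=\sum_{i=1}^p\langle J_iu,v\rangle e_i$ for all $u,v\in\mathfrak{N}$; one has $\bigcap_i\ker J_i=\mathfrak{Z}$. *)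

theory Defs
  imports "HOL-Analysis.Analysis"
begin

text \<open>The underlying finite-dimensional real vector space is a type of class
euclidean_space; its built-in inner product is used only to compute traces.
The pseudo-Euclidean metric is an arbitrary bilinear form B.\<close>

definition lie_algebra :: "('a::euclidean_space \<Rightarrow> 'a \<Rightarrow> 'a) \<Rightarrow> bool" where
  "lie_algebra br \<longleftrightarrow> bilinear br \<and> (\<forall>u. br u u = 0) \<and>
     (\<forall>u v w. br u (br v w) + br v (br w u) + br w (br u v) = 0)"

definition pseudo_euclidean_form :: "('a::euclidean_space \<Rightarrow> 'a \<Rightarrow> real) \<Rightarrow> bool" where
  "pseudo_euclidean_form B \<longleftrightarrow> bilinear B \<and> (\<forall>u v. B u v = B v u) \<and>
     (\<forall>u. (\<forall>v. B u v = 0) \<longrightarrow> u = 0)"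

definition lie_center :: "('a::euclidean_space \<Rightarrow> 'a \<Rightarrow> 'a) \<Rightarrow> 'a set" where
  "lie_center br = {z. \<forall>u. br z u = 0}"

definition two_step_nilpotent :: "('a::euclidean_space \<Rightarrow> 'a \<Rightarrow> 'a) \<Rightarrow> bool" where
  "two_step_nilpotent br \<longleftrightarrow> (\<exists>u v. br u v \<noteq> 0) \<and> (\<forall>u v. br u v \<in> lie_center br)"

definition is_basis_list :: "'a::euclidean_space set \<Rightarrow> (nat \<Rightarrow> 'a) \<Rightarrow> nat \<Rightarrow> bool" where
  "is_basis_list Z e p \<longleftrightarrow> inj_on e {..<p} \<and> independent (e ` {..<p}) \<and> span (e ` {..<p}) = Z"

definition structure_endos ::
  "('a::euclidean_space \<Rightarrow> 'a \<Rightarrow> real) \<Rightarrow> ('a \<Rightarrow> 'a \<Rightarrow> 'a) \<Rightarrow> (nat \<Rightarrow> 'a) \<Rightarrow> (nat \<Rightarrow> 'a \<Rightarrow> 'a) \<Rightarrow> nat \<Rightarrow> bool" where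
  "structure_endos B br e J p \<longleftrightarrow>
     (\<forall>i<p. linear (J i) \<and> (\<forall>u v. B (J i u) v = - B u (J i v))) \<and>
     (\<forall>u v. br u v = (\<Sum>i<p. B (J i u) v *\<^sub>R e i))"

text \<open>Trace of an endomorphism (basis independent for linear maps).\<close>
definition endo_trace :: "('a::euclidean_space \<Rightarrow> 'a) \<Rightarrow> real" where
  "endo_trace f = (\<Sum>b\<in>Basis. f b \<bullet> b)"

definition endoF ::
  "('a::euclidean_space \<Rightarrow> 'a \<Rightarrow> real) \<Rightarrow> (nat \<Rightarrow> 'a) \<Rightarrow> (nat \<Rightarrow> 'a \<Rightarrow> 'a) \<Rightarrow> nat \<Rightarrow> 'a \<Rightarrow> 'a" where
  "endoF B e J p u = (1/2) *\<^sub>R (\<Sum>i<p. \<Sum>j<p. B (e i) (e j) *\<^sub>R J i (J j u))"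

definition endoG ::
  "('a::euclidean_space \<Rightarrow> 'a \<Rightarrow> real) \<Rightarrow> (nat \<Rightarrow> 'a) \<Rightarrow> (nat \<Rightarrow> 'a \<Rightarrow> 'a) \<Rightarrow> nat \<Rightarrow> 'a \<Rightarrow> 'a" where
  "endoG B e J p u = (-1/4) *\<^sub>R (\<Sum>i<p. \<Sum>j<p. (B (e i) u * endo_trace (J i \<circ> J j)) *\<^sub>R e j)"

end

theory Submission
  imports Defs
begin

text \<open>The structure endomorphisms are skew-symmetric and, since the bracket vanishes on the
centre, they vanish on \<open>\<Z>\<close>; moreover \<open>\<langle>e\<^sub>i, J\<^sub>k v\<rangle> = -\<langle>J\<^sub>k e\<^sub>i, v\<rangle> = 0\<close>.
Symmetry of \<open>F\<close> follows from skew-symmetry of the \<open>J\<^sub>i\<close> and symmetry of \<open>\<langle>e\<^sub>i,e\<^sub>j\<rangle>\<close>; symmetry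
of \<open>G\<close> from \<open>tr(J\<^sub>i J\<^sub>j) = tr(J\<^sub>j J\<^sub>i)\<close>. If \<open>e'\<^sub>k = \<Sum>\<^sub>i P\<^sub>k\<^sub>i e\<^sub>i\<close> is another basis of the centre,
comparing coefficients in \<open>[u,v]\<close> and using nondegeneracy gives \<open>J\<^sub>i = \<Sum>\<^sub>k P\<^sub>k\<^sub>i J'\<^sub>k\<close>, so the
tensors \<open>\<langle>e\<^sub>i,e\<^sub>j\<rangle>\<close>, \<open>J\<^sub>i J\<^sub>j\<close> and \<open>tr(J\<^sub>i J\<^sub>j)\<close> transform so that \<open>F\<close> and \<open>G\<close> are unchanged.
Finally \<open>G\<close> takes values in \<open>\<Z>\<close>, which \<open>F\<close> kills, and \<open>F\<close> takes values in \<open>\<Z>\<^sup>\<perp>\<close>, which \<open>G\<close>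
kills.\<close>

lemma bilinear_sum_left:
  "bilinear B \<Longrightarrow> B (\<Sum>i\<in>S. f i) y = (\<Sum>i\<in>S. B (f i) y)"
  unfolding bilinear_def using linear_sum[of "\<lambda>x. B x y"] by auto

lemma bilinear_sum_right:
  "bilinear B \<Longrightarrow> B y (\<Sum>i\<in>S. f i) = (\<Sum>i\<in>S. B y (f i))"
  unfolding bilinear_def using linear_sum[of "\<lambda>x. B y x"] by auto

lemma bilinear_scaleR_left:
  "bilinear (B :: 'a::real_vector \<Rightarrow> 'b::real_vector \<Rightarrow> real) \<Longrightarrow> B (c *\<^sub>R x) y = c * B x y"
  by (simp add: bilinear_lmul)

lemma bilinear_scaleR_right:
  "bilinear (B :: 'a::real_vector \<Rightarrow> 'b::real_vector \<Rightarrow> real) \<Longrightarrow> B x (c *\<^sub>R y) = c * B x y"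
  by (simp add: bilinear_rmul)

lemma pseudo_euclidean_form_eqI:
  assumes "pseudo_euclidean_form B" "\<And>v. B x v = B y v"
  shows "x = y"
proof -
  have "bilinear B" using assms(1) unfolding pseudo_euclidean_form_def by auto
  then have "\<forall>v. B (x - y) v = 0" using assms(2) bilinear_lsub[of B] by simp
  then have "x - y = 0" using assms(1) unfolding pseudo_euclidean_form_def by blast
  then show ?thesis by simp
qed

lemma is_basis_list_coeff_unique:
  assumes "is_basis_list Z e p" "(\<Sum>i<p. c i *\<^sub>R e i) = (\<Sum>i<p. d i *\<^sub>R e i)" "i < p"
  shows "c i = d i"
proof -
  have inj: "inj_on e {..<p}" and ind: "independent (e ` {..<p})"
    using assms(1) unfolding is_basis_list_def by auto
  define u where "u v = c (inv_into {..<p} e v) - d (inv_into {..<p} e v)" for v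
  have "(\<Sum>v\<in>e ` {..<p}. u v *\<^sub>R v) = (\<Sum>i<p. (c i - d i) *\<^sub>R e i)"
    using inj by (simp add: sum.reindex u_def)
  also have "\<dots> = 0"
    using assms(2) by (simp add: scaleR_left_diff_distrib sum_subtractf)
  finally have "u (e i) = 0"
    using independentD[OF ind, of "e ` {..<p}" u "e i"] assms(3) by auto
  then show ?thesis using inj assms(3) by (simp add: u_def)
qed

lemma is_basis_list_sum_representation:
  assumes "is_basis_list Z e p" "z \<in> Z"
  shows "\<exists>c. z = (\<Sum>i<p. c i *\<^sub>R e i)"
proof -
  have inj: "inj_on e {..<p}" and "span (e ` {..<p}) = Z"
    using assms(1) unfolding is_basis_list_def by auto
  then obtain u where "z = (\<Sum>v\<in>e ` {..<p}. u v *\<^sub>R v)"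
    using assms(2) span_finite[of "e ` {..<p}"] by auto
  also have "\<dots> = (\<Sum>i<p. u (e i) *\<^sub>R e i)" using inj by (simp add: sum.reindex)
  finally show ?thesis by (rule exI[where x="\<lambda>i. u (e i)"])
qed

lemma is_basis_list_change_matrix:
  assumes "is_basis_list Z e p" "is_basis_list Z e' p'"
  obtains P where "\<forall>k<p'. e' k = (\<Sum>i<p. P k i *\<^sub>R e i)"
proof -
  have "e' k \<in> Z" if "k < p'" for k
    using assms(2) that span_base[of "e' k" "e' ` {..<p'}"] unfolding is_basis_list_def by auto
  then have "\<forall>k. \<exists>c. k < p' \<longrightarrow> e' k = (\<Sum>i<p. c i *\<^sub>R e i)"
    using is_basis_list_sum_representation[OF assms(1)] by blast
  then have "\<exists>P. \<forall>k. k < p' \<longrightarrow> e' k = (\<Sum>i<p. P k i *\<^sub>R e i)"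
    by (rule choice)
  then show ?thesis using that by blast
qed

lemma sum_swap_outer_pairs:
  "(\<Sum>i\<in>A. \<Sum>j\<in>B. \<Sum>k\<in>C. \<Sum>l\<in>D. f i j k l) = (\<Sum>k\<in>C. \<Sum>l\<in>D. \<Sum>i\<in>A. \<Sum>j\<in>B. f i j k l)"
proof -
  have "(\<Sum>i\<in>A. \<Sum>j\<in>B. \<Sum>k\<in>C. \<Sum>l\<in>D. f i j k l) = (\<Sum>i\<in>A. \<Sum>k\<in>C. \<Sum>j\<in>B. \<Sum>l\<in>D. f i j k l)"
    by (rule sum.cong[OF refl], rule sum.swap)
  also have "\<dots> = (\<Sum>i\<in>A. \<Sum>k\<in>C. \<Sum>l\<in>D. \<Sum>j\<in>B. f i j k l)"
    by (rule sum.cong[OF refl], rule sum.cong[OF refl], rule sum.swap)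
  also have "\<dots> = (\<Sum>k\<in>C. \<Sum>i\<in>A. \<Sum>l\<in>D. \<Sum>j\<in>B. f i j k l)"
    by (rule sum.swap)
  also have "\<dots> = (\<Sum>k\<in>C. \<Sum>l\<in>D. \<Sum>i\<in>A. \<Sum>j\<in>B. f i j k l)"
    by (rule sum.cong[OF refl], rule sum.swap)
  finally show ?thesis .
qed

lemma endo_trace_linear_comp:
  fixes f g :: "'a::euclidean_space \<Rightarrow> 'a"
  assumes "linear f"
  shows "endo_trace (f \<circ> g) = (\<Sum>b\<in>Basis. \<Sum>c\<in>Basis. (g b \<bullet> c) * (f c \<bullet> b))"
proof -
  have "f (g b) = (\<Sum>c\<in>Basis. (g b \<bullet> c) *\<^sub>R f c)" for b
  proof -
    have "f (g b) = f (\<Sum>c\<in>Basis. (g b \<bullet> c) *\<^sub>R c)"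
      by (simp add: euclidean_representation)
    also have "\<dots> = (\<Sum>c\<in>Basis. (g b \<bullet> c) *\<^sub>R f c)"
      using assms by (simp add: linear_sum linear_scale)
    finally show ?thesis .
  qed
  then show ?thesis unfolding endo_trace_def by (simp add: inner_sum_left)
qed

lemma endo_trace_comp_commute:
  fixes f g :: "'a::euclidean_space \<Rightarrow> 'a"
  assumes "linear f" "linear g"
  shows "endo_trace (f \<circ> g) = endo_trace (g \<circ> f)"
proof -
  have "endo_trace (f \<circ> g) = (\<Sum>b\<in>Basis. \<Sum>c\<in>Basis. (g b \<bullet> c) * (f c \<bullet> b))"
    by (rule endo_trace_linear_comp[OF assms(1)])
  also have "\<dots> = (\<Sum>c\<in>Basis. \<Sum>b\<in>Basis. (g b \<bullet> c) * (f c \<bullet> b))"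
    by (rule sum.swap)
  also have "\<dots> = endo_trace (g \<circ> f)"
    using endo_trace_linear_comp[OF assms(2), of f] by (simp add: mult.commute)
  finally show ?thesis .
qed

locale structure_endomorphisms =
  fixes B :: "'a::euclidean_space \<Rightarrow> 'a \<Rightarrow> real" and br :: "'a \<Rightarrow> 'a \<Rightarrow> 'a"
    and e :: "nat \<Rightarrow> 'a" and J :: "nat \<Rightarrow> 'a \<Rightarrow> 'a" and p :: nat
  assumes form: "pseudo_euclidean_form B"
    and basis: "is_basis_list (lie_center br) e p"
    and endos: "structure_endos B br e J p"
begin

lemma bilinear: "bilinear B"
  using form unfolding pseudo_euclidean_form_def by auto

lemma symmetric: "B x y = B y x"
  using form unfolding pseudo_euclidean_form_def by auto

lemma J_linear: "i < p \<Longrightarrow> linear (J i)"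
  using endos unfolding structure_endos_def by auto

lemma J_skew: "i < p \<Longrightarrow> B (J i x) y = - B x (J i y)"
  using endos unfolding structure_endos_def by auto

lemma bracket_eq: "br u v = (\<Sum>i<p. B (J i u) v *\<^sub>R e i)"
  using endos unfolding structure_endos_def by auto

lemmas bilinear_simps = bilinear_sum_left[OF bilinear] bilinear_sum_right[OF bilinear]
  bilinear_scaleR_left[OF bilinear] bilinear_scaleR_right[OF bilinear]

lemma basis_in_center: "k < p \<Longrightarrow> e k \<in> lie_center br"
  using basis span_base[of "e k" "e ` {..<p}"] unfolding is_basis_list_def by auto

lemma J_center_eq_0:
  assumes "z \<in> lie_center br" "i < p"
  shows "J i z = 0"
proof (rule pseudo_euclidean_form_eqI[OF form])
  fix v
  have "(\<Sum>i<p. B (J i z) v *\<^sub>R e i) = (\<Sum>i<p. 0 *\<^sub>R e i)"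
    using assms(1) bracket_eq[of z v] unfolding lie_center_def by simp
  from is_basis_list_coeff_unique[OF basis this assms(2)] have "B (J i z) v = 0" by simp
  then show "B (J i z) v = B 0 v" using bilinear_lzero[OF bilinear] by simp
qed

lemma J_basis_eq_0: "i < p \<Longrightarrow> k < p \<Longrightarrow> J i (e k) = 0"
  using J_center_eq_0 basis_in_center by blast

lemma basis_orthogonal_J: "i < p \<Longrightarrow> k < p \<Longrightarrow> B (e i) (J k y) = 0"
  using J_skew[of k "e i" y] J_basis_eq_0[of k i] bilinear_lzero[OF bilinear] by simp

lemma endoF_symmetric: "B (endoF B e J p u) v = B u (endoF B e J p v)"
proof -
  have "B (e i) (e j) * B (J i (J j u)) v = B (e j) (e i) * B u (J j (J i v))"
    if "i < p" "j < p" for i j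
    using J_skew[OF that(1)] J_skew[OF that(2)] symmetric[of "e i" "e j"] by simp
  then have "B (endoF B e J p u) v = 1/2 * (\<Sum>i<p. \<Sum>j<p. B (e j) (e i) * B u (J j (J i v)))"
    by (simp add: endoF_def bilinear_simps)
  also have "\<dots> = 1/2 * (\<Sum>j<p. \<Sum>i<p. B (e j) (e i) * B u (J j (J i v)))"
    by (subst sum.swap) (rule refl)
  also have "\<dots> = B u (endoF B e J p v)"
    by (simp add: endoF_def bilinear_simps)
  finally show ?thesis .
qed

lemma endoG_symmetric: "B (endoG B e J p u) v = B u (endoG B e J p v)"
proof -
  define T where "T i j = endo_trace (J i \<circ> J j)" for i j
  have T_sym: "T i j = T j i" if "i < p" "j < p" for i j
    unfolding T_def using endo_trace_comp_commute[OF J_linear[OF that(1)] J_linear[OF that(2)]] .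
  have "B (endoG B e J p u) v = -1/4 * (\<Sum>i<p. \<Sum>j<p. B (e i) u * T i j * B (e j) v)"
    unfolding endoG_def bilinear_scaleR_left[OF bilinear] by (simp add: bilinear_simps T_def)
  also have "\<dots> = -1/4 * (\<Sum>j<p. \<Sum>i<p. B (e i) u * T i j * B (e j) v)"
    by (subst sum.swap) (rule refl)
  also have "\<dots> = -1/4 * (\<Sum>j<p. \<Sum>i<p. B (e j) v * T j i * B u (e i))"
    using T_sym symmetric by (intro arg_cong[where f="\<lambda>x. -1/4 * x"] sum.cong refl) simp
  also have "\<dots> = B u (endoG B e J p v)"
    unfolding endoG_def bilinear_scaleR_right[OF bilinear]
    by (simp add: bilinear_simps T_def mult.commute mult.left_commute)
  finally show ?thesis .
qed

lemma endoF_endoG_eq_0: "endoF B e J p (endoG B e J p u) = 0"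
proof -
  have "J m (endoG B e J p u) = 0" if "m < p" for m
    using J_linear[OF that] J_basis_eq_0[OF that]
    by (simp add: endoG_def linear_sum linear_scale linear_neg)
  moreover have "J i 0 = 0" if "i < p" for i
    using J_linear[OF that] by (rule linear_0)
  ultimately show ?thesis by (simp add: endoF_def)
qed

lemma endoG_endoF_eq_0: "endoG B e J p (endoF B e J p u) = 0"
proof -
  have "B (e i) (endoF B e J p u) = 0" if "i < p" for i
    using that by (simp add: endoF_def bilinear_simps basis_orthogonal_J)
  then show ?thesis by (simp add: endoG_def)
qed

context
  fixes e' :: "nat \<Rightarrow> 'a" and J' :: "nat \<Rightarrow> 'a \<Rightarrow> 'a" and p' :: nat and P :: "nat \<Rightarrow> nat \<Rightarrow> real"
  assumes endos': "structure_endos B br e' J' p'"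
    and change: "\<forall>k<p'. e' k = (\<Sum>i<p. P k i *\<^sub>R e i)"
begin

lemma J_change_basis:
  assumes "i < p"
  shows "J i x = (\<Sum>k<p'. P k i *\<^sub>R J' k x)"
proof (rule pseudo_euclidean_form_eqI[OF form])
  fix v
  have "(\<Sum>i<p. B (J i x) v *\<^sub>R e i) = (\<Sum>k<p'. B (J' k x) v *\<^sub>R e' k)"
    using endos' bracket_eq unfolding structure_endos_def by auto
  also have "\<dots> = (\<Sum>k<p'. \<Sum>i<p. (B (J' k x) v * P k i) *\<^sub>R e i)"
    using change by (simp add: scaleR_sum_right)
  also have "\<dots> = (\<Sum>i<p. (\<Sum>k<p'. B (J' k x) v * P k i) *\<^sub>R e i)"
    by (subst sum.swap) (simp add: scaleR_sum_left)
  finally have "B (J i x) v = (\<Sum>k<p'. B (J' k x) v * P k i)"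
    by (rule is_basis_list_coeff_unique[OF basis _ assms])
  then show "B (J i x) v = B (\<Sum>k<p'. P k i *\<^sub>R J' k x) v"
    by (simp add: bilinear_simps mult.commute)
qed

lemma JJ_change_basis:
  assumes "i < p" "j < p"
  shows "J i (J j x) = (\<Sum>k<p'. \<Sum>l<p'. (P k i * P l j) *\<^sub>R J' k (J' l x))"
proof -
  have "linear (J' k)" if "k < p'" for k using endos' that unfolding structure_endos_def by auto
  then show ?thesis
    using J_change_basis[OF assms(1)] J_change_basis[OF assms(2)]
    by (simp add: linear_sum linear_scale scaleR_sum_right)
qed

lemma trace_JJ_change_basis:
  assumes "i < p" "j < p"
  shows "endo_trace (J i \<circ> J j) = (\<Sum>k<p'. \<Sum>l<p'. P k i * P l j * endo_trace (J' k \<circ> J' l))"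
proof -
  have "endo_trace (J i \<circ> J j) = (\<Sum>b\<in>Basis. \<Sum>k<p'. \<Sum>l<p'. P k i * P l j * (J' k (J' l b) \<bullet> b))"
    unfolding endo_trace_def using JJ_change_basis[OF assms]
    by (simp add: inner_sum_left mult.assoc)
  also have "\<dots> = (\<Sum>k<p'. \<Sum>l<p'. \<Sum>b\<in>Basis. P k i * P l j * (J' k (J' l b) \<bullet> b))"
    by (subst sum.swap) (intro sum.cong refl, rule sum.swap)
  finally show ?thesis unfolding endo_trace_def by (simp add: sum_distrib_left)
qed

lemma endoF_change_basis: "endoF B e' J' p' = endoF B e J p"
proof
  fix u
  have B_change: "B (e' k) (e' l) = (\<Sum>i<p. \<Sum>j<p. B (e i) (e j) * P k i * P l j)"
    if "k < p'" "l < p'" for k l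
  proof -
    have "B (e' k) (e' l) = (\<Sum>j<p. \<Sum>i<p. B (e i) (e j) * P k i * P l j)"
      using change that
      by (simp add: bilinear_simps sum_distrib_left mult.commute mult.left_commute)
    then show ?thesis by (subst (asm) sum.swap)
  qed
  have "(\<Sum>i<p. \<Sum>j<p. B (e i) (e j) *\<^sub>R J i (J j u))
      = (\<Sum>i<p. \<Sum>j<p. \<Sum>k<p'. \<Sum>l<p'. (B (e i) (e j) * P k i * P l j) *\<^sub>R J' k (J' l u))"
    using JJ_change_basis by (intro sum.cong refl) (simp add: scaleR_sum_right mult.assoc)
  also have "\<dots> = (\<Sum>k<p'. \<Sum>l<p'. B (e' k) (e' l) *\<^sub>R J' k (J' l u))"
    using B_change by (subst sum_swap_outer_pairs, intro sum.cong refl) (simp add: scaleR_sum_left)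
  finally show "endoF B e' J' p' u = endoF B e J p u" unfolding endoF_def by simp
qed

lemma endoG_change_basis: "endoG B e' J' p' = endoG B e J p"
proof
  fix u
  have "(\<Sum>k<p'. \<Sum>l<p'. (B (e' k) u * endo_trace (J' k \<circ> J' l)) *\<^sub>R e' l)
      = (\<Sum>k<p'. \<Sum>l<p'. \<Sum>j<p. \<Sum>i<p. (P k i * B (e i) u * endo_trace (J' k \<circ> J' l) * P l j) *\<^sub>R e j)"
    using change by (intro sum.cong refl)
      (simp add: bilinear_simps scaleR_sum_right scaleR_sum_left sum_distrib_right)
  also have "\<dots> = (\<Sum>i<p. \<Sum>j<p. \<Sum>k<p'. \<Sum>l<p'. (P k i * B (e i) u * endo_trace (J' k \<circ> J' l) * P l j) *\<^sub>R e j)"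
    by (subst sum_swap_outer_pairs) (rule sum.swap)
  also have "\<dots> = (\<Sum>i<p. \<Sum>j<p. (B (e i) u * endo_trace (J i \<circ> J j)) *\<^sub>R e j)"
    using trace_JJ_change_basis by (intro sum.cong refl)
      (simp add: scaleR_sum_left sum_distrib_left sum_distrib_right mult.commute mult.left_commute)
  finally show "endoG B e' J' p' u = endoG B e J p u" unfolding endoG_def by simp
qed

end

lemma endoF_endoG_basis_independent:
  assumes "is_basis_list (lie_center br) e' p'" "structure_endos B br e' J' p'"
  shows "endoF B e' J' p' = endoF B e J p \<and> endoG B e' J' p' = endoG B e J p"
proof -
  obtain P where "\<forall>k<p'. e' k = (\<Sum>i<p. P k i *\<^sub>R e i)"
    using is_basis_list_change_matrix[OF basis assms(1)] .
  then show ?thesis using endoF_change_basis endoG_change_basis assms(2) by blast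
qed

end

theorem mainTheorem2:
  fixes br :: "'a::euclidean_space \<Rightarrow> 'a \<Rightarrow> 'a"
    and B :: "'a \<Rightarrow> 'a \<Rightarrow> real"
    and e :: "nat \<Rightarrow> 'a" and J :: "nat \<Rightarrow> 'a \<Rightarrow> 'a" and p :: nat
  assumes "lie_algebra br"
    and "pseudo_euclidean_form B"
    and "two_step_nilpotent br"
    and "is_basis_list (lie_center br) e p"
    and "structure_endos B br e J p"
  shows "(\<forall>u v. B (endoF B e J p u) v = B u (endoF B e J p v))
    \<and> (\<forall>u v. B (endoG B e J p u) v = B u (endoG B e J p v))
    \<and> (\<forall>(e' :: nat \<Rightarrow> 'a) (J' :: nat \<Rightarrow> 'a \<Rightarrow> 'a) (p' :: nat).
          is_basis_list (lie_center br) e' p' \<and> structure_endos B br e' J' p' \<longrightarrow>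
          endoF B e' J' p' = endoF B e J p \<and> endoG B e' J' p' = endoG B e J p)
    \<and> endoF B e J p \<circ> endoG B e J p = (\<lambda>u. 0)
    \<and> endoG B e J p \<circ> endoF B e J p = (\<lambda>u. 0)"
proof -
  interpret structure_endomorphisms B br e J p
    using assms(2,4,5) by unfold_locales
  show ?thesis
    using endoF_symmetric endoG_symmetric endoF_endoG_basis_independent
      endoF_endoG_eq_0 endoG_endoF_eq_0
    by (auto simp: comp_def)
qed

end
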